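(* The infinite word $u_\beta$ has affine factor complexity (i.e. $\mathcal C(n)=an+b$ for all $n\in\mathbb N$ for some constants $a,b$) if and only if every left special factor of $u_\beta$ is a prefix of $u_\beta$.
   Context: $\beta>1$ is a simple Parry number with $d_\beta(1)=t_1\cdots t_m$, $m\ge2$, nonnegative integer digits, $t_1\ge1$, $t_m\ge1$, satisfying the Parry condition ($t_i\cdots t_m0^\omega$ lexicographically strictly smaller than $t_1\cdots t_m0^\omega$ for $2\le i\le m$). $\varphi$ is the substitution on $\mathcal A=\{0,\dots,m-1\}$ with $\varphi(k)=0^{t_{k+1}}(k+1)$ for $0\le k\le m-2$, $\varphi(m-1)=0^{t_m}$, and $u_\beta=\lim_n\varphi^n(0)$ is its fixed point. $\mathcal C(n)$ is the number of factors of $u_\beta$ of length $n$. For a factor $w$, ${\rm Lext}(w)=\{a\in\mathcal A: aw \text{ is a factor}\}$; $w$ is left special if $\#{\rm Lext}(w)\ge2$. *)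

theory Defs
  imports Complex_Main
begin

definition renyi_T :: "real \<Rightarrow> real \<Rightarrow> real" where
  "renyi_T \<beta> x = \<beta> * x - of_int \<lfloor>\<beta> * x\<rfloor>"

text \<open>The (i+1)-th digit t_(i+1) of d_beta(1) (0-indexed here):
  t_(i+1) = floor (beta * T^i(1)).\<close>
definition renyi_digit :: "real \<Rightarrow> nat \<Rightarrow> nat" where
  "renyi_digit \<beta> i = nat \<lfloor>\<beta> * ((renyi_T \<beta> ^^ i) 1)\<rfloor>"

definition dbeta_one_is :: "real \<Rightarrow> nat list \<Rightarrow> bool" where
  "dbeta_one_is \<beta> t \<longleftrightarrow>
     (\<forall>i. renyi_digit \<beta> i = (if i < length t then t ! i else 0))"

definition lex_less_seq :: "(nat \<Rightarrow> nat) \<Rightarrow> (nat \<Rightarrow> nat) \<Rightarrow> bool" where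
  "lex_less_seq x y \<longleftrightarrow> (\<exists>k. (\<forall>j<k. x j = y j) \<and> x k < y k)"

definition zero_ext :: "nat list \<Rightarrow> nat \<Rightarrow> nat" where
  "zero_ext t j = (if j < length t then t ! j else 0)"

text \<open>t_i ... t_m 0^omega <lex t_1 ... t_m 0^omega for 2 <= i <= m
  (i.e. shift by i-1 = 1 .. m-1).\<close>
definition parry_condition :: "nat list \<Rightarrow> bool" where
  "parry_condition t \<longleftrightarrow>
     (\<forall>i. 1 \<le> i \<and> i < length t \<longrightarrow> lex_less_seq (\<lambda>j. zero_ext t (i + j)) (zero_ext t))"

text \<open>phi(k) = 0^(t_(k+1)) (k+1) for k <= m-2, phi(m-1) = 0^(t_m).
  With 0-indexed lists, t_(k+1) = t ! k.\<close>
definition phi :: "nat list \<Rightarrow> nat \<Rightarrow> nat list" where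
  "phi t k = (if k + 1 < length t then replicate (t ! k) 0 @ [k + 1]
              else replicate (t ! k) 0)"

definition phi_word :: "nat list \<Rightarrow> nat list \<Rightarrow> nat list" where
  "phi_word t w = concat (map (phi t) w)"

definition u_beta :: "nat list \<Rightarrow> nat \<Rightarrow> nat" where
  "u_beta t = (THE u. \<forall>n i. i < length ((phi_word t ^^ n) [0]) \<longrightarrow>
                         u i = ((phi_word t ^^ n) [0]) ! i)"

definition factor :: "(nat \<Rightarrow> nat) \<Rightarrow> nat list \<Rightarrow> bool" where
  "factor u w \<longleftrightarrow> (\<exists>i. w = map u [i..<i + length w])"

definition is_prefix :: "(nat \<Rightarrow> nat) \<Rightarrow> nat list \<Rightarrow> bool" where
  "is_prefix u w \<longleftrightarrow> w = map u [0..<length w]"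

definition complexity :: "(nat \<Rightarrow> nat) \<Rightarrow> nat \<Rightarrow> nat" where
  "complexity u n = card {w. length w = n \<and> factor u w}"

definition Lext :: "nat \<Rightarrow> (nat \<Rightarrow> nat) \<Rightarrow> nat list \<Rightarrow> nat set" where
  "Lext m u w = {a. a < m \<and> factor u (a # w)}"

definition left_special :: "nat \<Rightarrow> (nat \<Rightarrow> nat) \<Rightarrow> nat list \<Rightarrow> bool" where
  "left_special m u w \<longleftrightarrow> card (Lext m u w) \<ge> 2"

end

theory Submission
  imports Defs
begin

text \<open>Every factor of length n + 1 has the form a w with w a factor of length n and a a left
  extension of w, so C(n + 1) is the sum of #Lext(w) over the factors w of length n. In u_beta
  every factor has a left extension, and every prefix has all m of them: phi^m(0) ends with
  b 0 for some letter b, so phi^(m + k)(0) contains phi^k(b) phi^k(0), where phi^k(b) ends with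
  the letter (b + k) mod m and phi^k(0) is a prefix of u_beta. Hence C(0) = 1, C(1) = m and
  C(n + 1) - C(n) = (m - 1) + sum of (#Lext(w) - 1) over the non-prefix factors w of length n.
  So C is affine, necessarily with slope m - 1, exactly when no non-prefix factor is left
  special.\<close>

definition factors_of_length :: "(nat \<Rightarrow> nat) \<Rightarrow> nat \<Rightarrow> nat list set" where
  "factors_of_length u n = {w. length w = n \<and> factor u w}"

lemma complexity_eq_card_factors_of_length: "complexity u n = card (factors_of_length u n)"
  by (simp add: complexity_def factors_of_length_def)

lemma factors_of_length_0 [simp]: "factors_of_length u 0 = {[]}"
  by (auto simp: factors_of_length_def factor_def)

lemma prefix_in_factors_of_length: "map u [0..<n] \<in> factors_of_length u n"
  by (auto simp: factors_of_length_def factor_def intro: exI[of _ 0])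

lemma factor_ConsD:
  assumes "factor u (a # w)"
  shows "factor u w"
proof -
  obtain i where "a # w = map u [i..<i + Suc (length w)]"
    using assms by (auto simp: factor_def)
  then have "w = map u [Suc i..<Suc i + length w]"
    by (simp del: upt_Suc add: upt_conv_Cons)
  then show ?thesis
    unfolding factor_def by blast
qed

lemma set_factor_subset_range: "factor u w \<Longrightarrow> set w \<subseteq> range u"
  unfolding factor_def by (metis image_mono set_map subset_UNIV)

lemma finite_factors_of_length:
  assumes "finite (range u)"
  shows "finite (factors_of_length u n)"
proof (rule finite_subset)
  show "factors_of_length u n \<subseteq> {w. set w \<subseteq> range u \<and> length w = n}"
    using set_factor_subset_range by (auto simp: factors_of_length_def)
qed (rule finite_lists_length_eq[OF assms])

lemma finite_Lext [simp]: "finite (Lext m u w)"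
  by (rule finite_subset[of _ "{..<m}"]) (auto simp: Lext_def)

lemma complexity_Suc_eq_sum_card_Lext:
  assumes "range u \<subseteq> {..<m}"
  shows "complexity u (Suc n) = (\<Sum>w\<in>factors_of_length u n. card (Lext m u w))"
proof -
  let ?E = "SIGMA w:factors_of_length u n. Lext m u w"
  have "factors_of_length u (Suc n) = (\<lambda>(w, a). a # w) ` ?E"
  proof (intro equalityI subsetI)
    fix v assume v: "v \<in> factors_of_length u (Suc n)"
    then obtain a w where vw: "v = a # w" and "length w = n" and aw: "factor u (a # w)"
      unfolding factors_of_length_def by (cases v) auto
    have "a < m"
      using set_factor_subset_range[OF aw] assms by auto
    with aw \<open>length w = n\<close> have "(w, a) \<in> ?E"
      by (auto simp: factors_of_length_def Lext_def dest: factor_ConsD)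
    then show "v \<in> (\<lambda>(w, a). a # w) ` ?E"
      unfolding vw by (rule rev_image_eqI) simp
  qed (auto simp: factors_of_length_def Lext_def)
  moreover have "inj_on (\<lambda>(w, a). a # w) ?E"
    by (auto simp: inj_on_def)
  ultimately have "complexity u (Suc n) = card ?E"
    by (simp add: complexity_eq_card_factors_of_length card_image)
  also have "\<dots> = (\<Sum>w\<in>factors_of_length u n. card (Lext m u w))"
    using finite_factors_of_length[OF finite_subset[OF assms]] by (simp add: card_SigmaI)
  finally show ?thesis .
qed

lemma Lext_nonempty_if_not_prefix:
  assumes "range u \<subseteq> {..<m}" and "factor u w" and "\<not> is_prefix u w"
  shows "Lext m u w \<noteq> {}"
proof -
  obtain i where w: "w = map u [i..<i + length w]"
    using assms(2) by (auto simp: factor_def)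
  with assms(3) have "i \<noteq> 0"
    unfolding is_prefix_def by (metis add_0)
  with w have "factor u (u (i - 1) # w)"
    unfolding factor_def by (intro exI[of _ "i - 1"]) (simp add: upt_conv_Cons)
  with assms(1) have "u (i - 1) \<in> Lext m u w"
    by (auto simp: Lext_def)
  then show ?thesis by blast
qed

lemma affine_iff_constant_increment:
  fixes f :: "nat \<Rightarrow> real"
  shows "(\<exists>a b. \<forall>n. f n = a * real n + b) \<longleftrightarrow> (\<forall>n. f (Suc n) = f n + (f 1 - f 0))"
proof
  assume "\<exists>a b. \<forall>n. f n = a * real n + b"
  then obtain a b where "\<And>n. f n = a * real n + b"
    by blast
  then show "\<forall>n. f (Suc n) = f n + (f 1 - f 0)"
    by (simp add: algebra_simps)
next
  assume step: "\<forall>n. f (Suc n) = f n + (f 1 - f 0)"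
  have "f n = (f 1 - f 0) * real n + f 0" for n
  proof (induction n)
    case (Suc n)
    then show ?case
      using step[rule_format, of n] by (simp add: algebra_simps)
  qed simp
  then show "\<exists>a b. \<forall>n. f n = a * real n + b"
    by blast
qed

locale prefixes_fully_left_extendable =
  fixes u :: "nat \<Rightarrow> nat" and m :: nat
  assumes range_subset: "range u \<subseteq> {..<m}"
    and Lext_prefix: "\<And>n. Lext m u (map u [0..<n]) = {..<m}"
begin

lemma alphabet_nonempty: "m \<ge> 1"
  using range_subset by fastforce

lemma card_Lext_pos:
  assumes "factor u w"
  shows "card (Lext m u w) > 0"
proof (cases "is_prefix u w")
  case True
  then have "Lext m u w = {..<m}"
    using Lext_prefix unfolding is_prefix_def by metis
  then show ?thesis
    using alphabet_nonempty by simp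
next
  case False
  then show ?thesis
    using Lext_nonempty_if_not_prefix[OF range_subset assms]
    by (simp add: card_gt_0_iff)
qed

lemma complexity_Suc_eq_add_excess:
  "complexity u (Suc n) =
     complexity u n + (\<Sum>w\<in>factors_of_length u n. card (Lext m u w) - 1)"
proof -
  have "complexity u (Suc n) = (\<Sum>w\<in>factors_of_length u n. (card (Lext m u w) - 1) + 1)"
    unfolding complexity_Suc_eq_sum_card_Lext[OF range_subset]
  proof (rule sum.cong)
    fix w assume "w \<in> factors_of_length u n"
    then have "card (Lext m u w) > 0"
      by (simp add: card_Lext_pos factors_of_length_def)
    then show "card (Lext m u w) = (card (Lext m u w) - 1) + 1"
      by simp
  qed simp
  then show ?thesis
    unfolding sum.distrib by (simp add: complexity_eq_card_factors_of_length)
qed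

lemma complexity_0: "complexity u 0 = 1"
  by (simp add: complexity_eq_card_factors_of_length)

lemma complexity_1: "complexity u (Suc 0) = m"
  using complexity_Suc_eq_sum_card_Lext[OF range_subset, of 0] Lext_prefix[of 0] by simp

lemma sum_excess_eq_iff:
  "(\<Sum>w\<in>factors_of_length u n. card (Lext m u w) - 1) = m - 1 \<longleftrightarrow>
     (\<forall>w\<in>factors_of_length u n. left_special m u w \<longrightarrow> is_prefix u w)"
proof -
  let ?F = "factors_of_length u n" and ?p = "map u [0..<n]"
  have prefix_iff: "is_prefix u w \<longleftrightarrow> w = ?p" if "w \<in> ?F" for w
    using that by (auto simp: is_prefix_def factors_of_length_def)
  have fin: "finite ?F"
    using finite_factors_of_length finite_subset[OF range_subset] by blast
  have "(\<Sum>w\<in>?F. card (Lext m u w) - 1) =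
      (m - 1) + (\<Sum>w\<in>?F - {?p}. card (Lext m u w) - 1)"
    using sum.remove[OF fin prefix_in_factors_of_length, of "\<lambda>w. card (Lext m u w) - 1"]
      Lext_prefix
    by simp
  then have "(\<Sum>w\<in>?F. card (Lext m u w) - 1) = m - 1 \<longleftrightarrow>
      (\<forall>w\<in>?F - {?p}. card (Lext m u w) \<le> 1)"
    using fin by simp
  also have "\<dots> \<longleftrightarrow> (\<forall>w\<in>?F - {?p}. \<not> left_special m u w)"
    unfolding left_special_def by (intro ball_cong) auto
  also have "\<dots> \<longleftrightarrow> (\<forall>w\<in>?F. left_special m u w \<longrightarrow> is_prefix u w)"
    using prefix_iff by blast
  finally show ?thesis .
qed

theorem affine_complexity_iff_left_special_imp_prefix:
  "(\<exists>a b :: real. \<forall>n. real (complexity u n) = a * real n + b) \<longleftrightarrow>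
     (\<forall>w. factor u w \<and> left_special m u w \<longrightarrow> is_prefix u w)"
proof -
  have "real (complexity u 1) - real (complexity u 0) = real (m - 1)"
    using alphabet_nonempty by (simp add: complexity_0 complexity_1 of_nat_diff)
  then have "(\<exists>a b :: real. \<forall>n. real (complexity u n) = a * real n + b) \<longleftrightarrow>
      (\<forall>n. real (complexity u (Suc n)) = real (complexity u n + (m - 1)))"
    unfolding affine_iff_constant_increment of_nat_add by presburger
  also have "\<dots> \<longleftrightarrow> (\<forall>n. complexity u (Suc n) = complexity u n + (m - 1))"
    by (simp only: of_nat_eq_iff)
  also have "\<dots> \<longleftrightarrow> (\<forall>n. \<forall>w\<in>factors_of_length u n. left_special m u w \<longrightarrow> is_prefix u w)"
    by (simp only: complexity_Suc_eq_add_excess add_left_cancel sum_excess_eq_iff)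
  also have "\<dots> \<longleftrightarrow> (\<forall>w. factor u w \<and> left_special m u w \<longrightarrow> is_prefix u w)"
    by (auto simp: factors_of_length_def)
  finally show ?thesis .
qed

end

lemma phi_word_Nil [simp]: "phi_word t [] = []"
  by (simp add: phi_word_def)

lemma phi_word_Cons [simp]: "phi_word t (c # w) = phi t c @ phi_word t w"
  by (simp add: phi_word_def)

lemma phi_word_append [simp]: "phi_word t (v @ w) = phi_word t v @ phi_word t w"
  by (simp add: phi_word_def)

lemma funpow_phi_word_append:
  "(phi_word t ^^ k) (v @ w) = (phi_word t ^^ k) v @ (phi_word t ^^ k) w"
  by (induction k) auto

locale beta_substitution =
  fixes t :: "nat list" and m :: nat
  assumes length_t: "length t = m" and two_le_m: "2 \<le> m"
    and first_digit_pos: "t ! 0 \<ge> 1" and last_digit_pos: "t ! (m - 1) \<ge> 1"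
begin

definition phi_iterate :: "nat \<Rightarrow> nat list" where
  "phi_iterate n = (phi_word t ^^ n) [0]"

lemma set_phi_subset: "set (phi t c) \<subseteq> {..<m}"
  using length_t two_le_m by (auto simp: phi_def)

lemma set_funpow_phi_word_subset:
  "set w \<subseteq> {..<m} \<Longrightarrow> set ((phi_word t ^^ k) w) \<subseteq> {..<m}"
proof (induction k)
  case (Suc k)
  then show ?case
    using set_phi_subset by (auto simp: phi_word_def)
qed simp

lemma phi_ends_with_successor:
  assumes "c < m"
  obtains v where "phi t c = v @ [Suc c mod m]"
proof (cases "c + 1 < m")
  case True
  then show ?thesis
    using that length_t by (simp add: phi_def)
next
  case False
  with assms have c: "Suc c = m"
    by simp
  obtain k where "t ! c = Suc k"
    using last_digit_pos c by (metis diff_Suc_1 not0_implies_Suc not_one_le_zero)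
  then have "phi t c = replicate k 0 @ [Suc c mod m]"
    using False length_t c by (simp add: phi_def replicate_append_same)
  then show ?thesis
    using that by blast
qed

lemma funpow_phi_word_ends_with:
  assumes "c < m"
  obtains v where "(phi_word t ^^ k) [c] = v @ [(c + k) mod m]"
proof -
  have "\<exists>v. (phi_word t ^^ k) [c] = v @ [(c + k) mod m]"
  proof (induction k)
    case (Suc k)
    then obtain v where v: "(phi_word t ^^ k) [c] = v @ [(c + k) mod m]"
      by blast
    have "(c + k) mod m < m"
      using two_le_m by simp
    then obtain v' where "phi t ((c + k) mod m) = v' @ [(c + Suc k) mod m]"
      by (rule phi_ends_with_successor) (simp add: mod_Suc_eq)
    with v show ?case
      by simp
  qed (use assms in simp)
  then show ?thesis
    using that by blast
qed

lemma phi_zero: "phi t 0 = 0 # replicate (t ! 0 - 1) 0 @ [1]"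
proof -
  obtain k where "t ! 0 = Suc k"
    using first_digit_pos by (metis not0_implies_Suc not_one_le_zero)
  then show ?thesis
    using length_t two_le_m by (simp add: phi_def)
qed

lemma phi_iterate_Suc:
  "phi_iterate (Suc n) =
     phi_iterate n @ (phi_word t ^^ n) (replicate (t ! 0 - 1) 0) @ (phi_word t ^^ n) [1]"
proof -
  have "phi_iterate (Suc n) = (phi_word t ^^ n) ([0] @ replicate (t ! 0 - 1) 0 @ [1])"
    by (simp add: phi_iterate_def funpow_Suc_right phi_zero del: funpow.simps)
  then show ?thesis
    by (simp only: funpow_phi_word_append phi_iterate_def)
qed

lemma length_phi_iterate: "n < length (phi_iterate n)"
proof (induction n)
  case 0
  then show ?case
    by (simp add: phi_iterate_def)
next
  case (Suc n)
  have "1 < m"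
    using two_le_m by simp
  then obtain v where "(phi_word t ^^ n) [1] = v @ [(1 + n) mod m]"
    by (rule funpow_phi_word_ends_with)
  with Suc show ?case
    by (simp add: phi_iterate_Suc)
qed

lemma phi_iterate_prefix: "n \<le> k \<Longrightarrow> \<exists>r. phi_iterate k = phi_iterate n @ r"
proof (induction k rule: dec_induct)
  case (step k)
  then show ?case
    by (auto simp: phi_iterate_Suc)
qed simp

lemma set_phi_iterate_subset: "set (phi_iterate n) \<subseteq> {..<m}"
  unfolding phi_iterate_def using two_le_m by (intro set_funpow_phi_word_subset) simp

lemma u_beta_eq: "u_beta t = (\<lambda>i. phi_iterate i ! i)"
proof -
  have "phi_iterate i ! i = phi_iterate n ! i" if "i < length (phi_iterate n)" for n i
  proof (cases "n \<le> i")
    case True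
    then show ?thesis
      using phi_iterate_prefix that by (metis nth_append)
  next
    case False
    then show ?thesis
      using phi_iterate_prefix length_phi_iterate[of i] by (metis nat_le_linear nth_append)
  qed
  moreover have "v = (\<lambda>i. phi_iterate i ! i)"
    if "\<forall>n i. i < length (phi_iterate n) \<longrightarrow> v i = phi_iterate n ! i" for v
    using that length_phi_iterate by blast
  ultimately show ?thesis
    unfolding u_beta_def phi_iterate_def[symmetric] by (intro the_equality) auto
qed

lemma u_beta_nth: "i < length (phi_iterate n) \<Longrightarrow> u_beta t i = phi_iterate n ! i"
  unfolding u_beta_eq
  by (metis length_phi_iterate nat_le_linear nth_append phi_iterate_prefix)

lemma range_u_beta_subset: "range (u_beta t) \<subseteq> {..<m}"
  using u_beta_eq set_phi_iterate_subset length_phi_iterate by (auto intro: nth_mem)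

lemma factor_u_beta_if_infix:
  assumes "phi_iterate n = x @ w @ y"
  shows "factor (u_beta t) w"
proof -
  have "u_beta t (length x + i) = w ! i" if "i < length w" for i
    using that assms u_beta_nth[of "length x + i" n] by (simp add: nth_append)
  then have "w = map (u_beta t) [length x..<length x + length w]"
    by (intro nth_equalityI) simp_all
  then show ?thesis
    unfolding factor_def by blast
qed

lemma map_u_beta_upt:
  "n \<le> length (phi_iterate k) \<Longrightarrow> map (u_beta t) [0..<n] = take n (phi_iterate k)"
  by (intro nth_equalityI) (auto simp: u_beta_nth)

lemma phi_iterate_add: "phi_iterate (n + k) = (phi_word t ^^ k) (phi_iterate n)"
  by (simp add: phi_iterate_def funpow_add add.commute[of n k])

lemma phi_iterate_m_ends_with_0:
  obtains v b where "phi_iterate m = v @ [b, 0]" and "b < m"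
proof -
  obtain v' where v': "phi_iterate m = v' @ [0]"
    using two_le_m funpow_phi_word_ends_with[of 0 m] by (auto simp: phi_iterate_def)
  moreover have "v' \<noteq> []"
    using length_phi_iterate[of m] two_le_m v' by auto
  ultimately obtain v b where "phi_iterate m = v @ [b, 0]"
    by (metis append.assoc append_Cons append_Nil rev_exhaust)
  moreover from this have "b < m"
    using set_phi_iterate_subset[of m] by auto
  ultimately show ?thesis
    using that by blast
qed

lemma Lext_u_beta_prefix: "Lext m (u_beta t) (map (u_beta t) [0..<n]) = {..<m}"
proof -
  have "factor (u_beta t) (a # map (u_beta t) [0..<n])" if "a < m" for a
  proof -
    obtain v b where vb: "phi_iterate m = v @ [b, 0]" and "b < m"
      by (rule phi_iterate_m_ends_with_0)
    \<comment> \<open>any k \<ge> n with b + k = a modulo m will do\<close>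
    define k where "k = (m - b + a) + m * n"
    have "(b + k) mod m = a"
      unfolding k_def using \<open>b < m\<close> \<open>a < m\<close> by (simp add: add.assoc[symmetric])
    then obtain z where z: "(phi_word t ^^ k) [b] = z @ [a]"
      using funpow_phi_word_ends_with[OF \<open>b < m\<close>, of k] by metis
    have "n \<le> k"
      unfolding k_def using two_le_m by (simp add: trans_le_add2)
    then have "map (u_beta t) [0..<n] = take n (phi_iterate k)"
      using length_phi_iterate[of k] by (intro map_u_beta_upt) simp
    moreover have "phi_iterate (m + k) =
        ((phi_word t ^^ k) v @ z) @ (a # take n (phi_iterate k)) @ drop n (phi_iterate k)"
      using vb z funpow_phi_word_append[of k t "[b]" "[0]"]
      unfolding phi_iterate_add by (simp add: funpow_phi_word_append phi_iterate_def)
    ultimately show ?thesis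
      by (metis factor_u_beta_if_infix)
  qed
  then show ?thesis
    by (auto simp: Lext_def)
qed

sublocale prefixes_fully_left_extendable "u_beta t" m
  by unfold_locales (fact range_u_beta_subset, fact Lext_u_beta_prefix)

end

theorem proposition3:
  fixes \<beta> :: real and t :: "nat list" and m :: nat
  assumes "\<beta> > 1"
    and "m = length t" and "m \<ge> 2"
    and "t ! 0 \<ge> 1" and "t ! (m - 1) \<ge> 1"
    and "parry_condition t"
    and "dbeta_one_is \<beta> t"
  shows "(\<exists>a b :: real. \<forall>n. real (complexity (u_beta t) n) = a * real n + b)
     \<longleftrightarrow> (\<forall>w. factor (u_beta t) w \<and> left_special m (u_beta t) w \<longrightarrow> is_prefix (u_beta t) w)"
proof -
  \<comment> \<open>The hypotheses on \<beta> only say that t comes from a simple Parry number; the argument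
    uses nothing but the shape of the substitution.\<close>
  interpret beta_substitution t m
    using assms by unfold_locales simp_all
  show ?thesis
    by (rule affine_complexity_iff_left_special_imp_prefix)
qed

end
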